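(* Let $(T,X)$ be a thickly stable flow, where $T$ is an abelian Hausdorff topological group and $X$ a Hausdorff uniform space. If $x\in X$ is an a.p. point, then the subflow $(T,\overline{Tx})$ is an a.p. flow even when $T$ is regarded as a discrete group (i.e. for every $\varepsilon\in\mathscr U_X$ there is a set $A\subseteq T$ and a finite set $F\subseteq T$ with $FA=T$ such that $Ay\subseteq\varepsilon[y]$ for all $y\in\overline{Tx}$), and moreover $(T,\overline{Tx})$ is equicontinuous.
   Context: $\mathscr U_X$ is a compatible symmetric uniformity of $X$; for $\varepsilon\in\mathscr U_X$ and $A\subseteq X$, $\varepsilon[A]=\{y:\exists a\in A,\ (a,y)\in\varepsilon\}$. A set $S\subseteq T$ is (right) thick if for every compact $K\subseteq T$ there is $t\in T$ with $Kt\subseteq S$; $A\subseteq T$ is (right) syndetic if there is a compact $K\subseteq T$ with $Kt\cap A\neq\emptyset$ for all $t\in T$. A point $x$ is almost periodic (a.p.) if $\{t: tx\in U\}$ is syndetic for every neighborhood $U$ of $x$. A flow $(T,X)$ is thickly stable if for every $\varepsilon\in\mathscr U_X$ and every $x\in X$ there exist $\delta\in\mathscr U_X$ and a thick $S\subseteq T$ such that $s(\delta[x])\subseteq\varepsilon[sx]$ for all $s\in S$. A flow is an a.p. flow if for every $\alpha\in\mathscr U_X$ there is a syndetic $A\subseteq T$ with $Ax\subseteq\alpha[x]$ for all $x\in X$. A flow $(T,Z)$ is equicontinuous if for every $\varepsilon\in\mathscr U$ and $z\in Z$ there is $\delta$ with $t(\delta[z])\subseteq\varepsilon[tz]$ for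 all $t\in T$. *)

theory Defs
  imports "HOL-Analysis.Analysis"
begin

text \<open>Entourages of the (compatible, symmetric) uniformity of X: the symmetric members
  of the uniformity filter (they form a base of the uniformity).\<close>
definition entourage :: "('b::uniform_space \<times> 'b) set \<Rightarrow> bool" where
  "entourage E \<longleftrightarrow> eventually (\<lambda>p. p \<in> E) uniformity \<and> sym E"

definition ent_img :: "('b \<times> 'b) set \<Rightarrow> 'b set \<Rightarrow> 'b set" where
  "ent_img E A = {y. \<exists>a\<in>A. (a, y) \<in> E}"

definition flow :: "('a::topological_ab_group_add \<Rightarrow> 'b::topological_space \<Rightarrow> 'b) \<Rightarrow> bool" where
  "flow act \<longleftrightarrow> continuous_on UNIV (\<lambda>(t, x). act t x)
     \<and> (\<forall>x. act 0 x = x) \<and> (\<forall>s t x. act (s + t) x = act s (act t x))"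

definition thick :: "'a::topological_ab_group_add set \<Rightarrow> bool" where
  "thick S \<longleftrightarrow> (\<forall>K. compact K \<longrightarrow> (\<exists>t. (\<lambda>k. k + t) ` K \<subseteq> S))"

definition syndetic :: "'a::topological_ab_group_add set \<Rightarrow> bool" where
  "syndetic A \<longleftrightarrow> (\<exists>K. compact K \<and> (\<forall>t. (\<lambda>k. k + t) ` K \<inter> A \<noteq> {}))"

definition ap_point :: "('a::topological_ab_group_add \<Rightarrow> 'b::topological_space \<Rightarrow> 'b) \<Rightarrow> 'b \<Rightarrow> bool" where
  "ap_point act x \<longleftrightarrow> (\<forall>U. open U \<and> x \<in> U \<longrightarrow> syndetic {t. act t x \<in> U})"

definition thickly_stable :: "('a::topological_ab_group_add \<Rightarrow> 'b::uniform_space \<Rightarrow> 'b) \<Rightarrow> bool" where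
  "thickly_stable act \<longleftrightarrow> (\<forall>\<epsilon> x. entourage \<epsilon> \<longrightarrow>
     (\<exists>\<delta> S. entourage \<delta> \<and> thick S \<and>
        (\<forall>s\<in>S. act s ` ent_img \<delta> {x} \<subseteq> ent_img \<epsilon> {act s x})))"

text \<open>The subflow on the invariant set Y is an a.p. flow when T is regarded as discrete:
  syndetic sets w.r.t. finite K, i.e. F + A = T with F finite.\<close>
definition discrete_ap_on :: "('a::ab_group_add \<Rightarrow> 'b::uniform_space \<Rightarrow> 'b) \<Rightarrow> 'b set \<Rightarrow> bool" where
  "discrete_ap_on act Y \<longleftrightarrow> (\<forall>\<epsilon>. entourage \<epsilon> \<longrightarrow>
     (\<exists>A F. finite F \<and> {f + a | f a. f \<in> F \<and> a \<in> A} = UNIV \<and>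
        (\<forall>y\<in>Y. \<forall>a\<in>A. act a y \<in> ent_img \<epsilon> {y})))"

definition equicontinuous_on :: "('a \<Rightarrow> 'b::uniform_space \<Rightarrow> 'b) \<Rightarrow> 'b set \<Rightarrow> bool" where
  "equicontinuous_on act Y \<longleftrightarrow> (\<forall>\<epsilon> z. entourage \<epsilon> \<and> z \<in> Y \<longrightarrow>
     (\<exists>\<delta>. entourage \<delta> \<and> (\<forall>t. act t ` (ent_img \<delta> {z} \<inter> Y) \<subseteq> ent_img \<epsilon> {act t z})))"

end

theory Submission
  imports Defs
begin

text \<open>
  Thick stability at x together with the syndetic return times of x makes the flow
  equicontinuous at x on the orbit of x: to compare t(\<tau>x) with tx, pick a return time r
  with t - r in the thick set, so both points are images under t - r of points near x.
  By continuity this passes to the orbit closure Y. Since x is almost periodic, x lies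
  in the orbit closure of every point of Y, which transports equicontinuity from x to all
  of Y. Finally, the times a with -a x close to x move every point of Y only a little, and
  a syndetic set thickened by a neighbourhood of 0 is syndetic with respect to a finite set.
\<close>

lemma entourage_refl: "entourage E \<Longrightarrow> (x, x) \<in> E"
  unfolding entourage_def using uniformity_refl[of "\<lambda>p. p \<in> E"] by auto

lemma entourage_sym: "entourage E \<Longrightarrow> (x, y) \<in> E \<Longrightarrow> (y, x) \<in> E"
  unfolding entourage_def by (auto simp: sym_def)

lemma entourage_Int: "entourage D \<Longrightarrow> entourage E \<Longrightarrow> entourage (D \<inter> E)"
  unfolding entourage_def by (auto simp: eventually_conj_iff sym_def)

lemma eventually_uniformity_imp_entourage:
  assumes "eventually P uniformity"
  shows "\<exists>E. entourage E \<and> (\<forall>p\<in>E. P p)"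
proof -
  have "eventually (\<lambda>p. P (snd p, fst p)) uniformity"
    using uniformity_sym[OF assms] by (simp add: case_prod_unfold)
  then have "eventually (\<lambda>p. P p \<and> P (snd p, fst p)) uniformity"
    using assms by (simp add: eventually_conj_iff)
  then show ?thesis
    by (intro exI[of _ "{p. P p \<and> P (snd p, fst p)}"]) (auto simp: entourage_def sym_def)
qed

lemma entourage_half:
  assumes "entourage E"
  obtains D where "entourage D" "\<And>a b c. (a, b) \<in> D \<Longrightarrow> (b, c) \<in> D \<Longrightarrow> (a, c) \<in> E"
proof -
  obtain P where P: "eventually P uniformity" "\<And>a b c. P (a, b) \<Longrightarrow> P (b, c) \<Longrightarrow> (a, c) \<in> E"
    using uniformity_transE[of "\<lambda>p. p \<in> E"] assms unfolding entourage_def by metis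
  obtain D where "entourage D" "\<forall>p\<in>D. P p"
    using eventually_uniformity_imp_entourage[OF P(1)] by blast
  then show ?thesis using P(2) that by blast
qed

lemma entourage_third:
  assumes "entourage E"
  obtains D where "entourage D"
    "\<And>a b c d. (a, b) \<in> D \<Longrightarrow> (b, c) \<in> D \<Longrightarrow> (c, d) \<in> D \<Longrightarrow> (a, d) \<in> E"
proof -
  obtain D1 where D1: "entourage D1" "\<And>a b c. (a, b) \<in> D1 \<Longrightarrow> (b, c) \<in> D1 \<Longrightarrow> (a, c) \<in> E"
    using entourage_half[OF assms] by blast
  obtain D where D: "entourage D" "\<And>a b c. (a, b) \<in> D \<Longrightarrow> (b, c) \<in> D \<Longrightarrow> (a, c) \<in> D1"
    using entourage_half[OF D1(1)] by blast
  have "(c, d) \<in> D1" if "(c, d) \<in> D" for c d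
    using D that entourage_refl[OF D(1)] by blast
  then show ?thesis using that D D1 by blast
qed

lemma entourage_nhds:
  assumes "entourage E"
  obtains V where "open V" "y \<in> V" "\<And>z. z \<in> V \<Longrightarrow> (y, z) \<in> E"
proof -
  have "eventually (\<lambda>z. (y, z) \<in> E) (nhds y)"
    using assms unfolding eventually_nhds_uniformity entourage_def
    by (auto elim: eventually_mono)
  then show ?thesis using that unfolding eventually_nhds by blast
qed

lemma nhds_entourage:
  assumes "open V" "y \<in> V"
  obtains E where "entourage E" "\<And>z. (y, z) \<in> E \<Longrightarrow> z \<in> V"
proof -
  have "eventually (\<lambda>(y', z). y' = y \<longrightarrow> z \<in> V) uniformity"
    using assms eventually_nhds_uniformity[of "\<lambda>z. z \<in> V"] eventually_nhds by blast
  from eventually_uniformity_imp_entourage[OF this] that show ?thesis by auto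
qed

lemma closure_entourage_close:
  assumes "y \<in> closure S" "entourage E"
  obtains s where "s \<in> S" "(y, s) \<in> E"
proof -
  obtain V where V: "open V" "y \<in> V" "\<And>z. z \<in> V \<Longrightarrow> (y, z) \<in> E"
    using entourage_nhds[OF assms(2)] by blast
  then have "S \<inter> V \<noteq> {}" using assms(1) closure_iff_nhds_not_empty by blast
  then show ?thesis using V that by blast
qed

lemma syndetic_meets_thick_translate:
  fixes R S :: "'a::topological_ab_group_add set"
  assumes "syndetic R" "thick S"
  obtains r where "r \<in> R" "t - r \<in> S"
proof -
  obtain K where K: "compact K" "\<And>t. (\<lambda>k. k + t) ` K \<inter> R \<noteq> {}"
    using assms(1) unfolding syndetic_def by blast
  have "compact (uminus ` K)"
    by (rule compact_continuous_image[OF _ K(1)]) (intro continuous_intros)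
  then obtain u where u: "(\<lambda>k. k + u) ` uminus ` K \<subseteq> S"
    using assms(2) unfolding thick_def by blast
  obtain k where k: "k \<in> K" "k + (t - u) \<in> R" using K(2)[of "t - u"] by blast
  have "t - (k + (t - u)) = - k + u" by (simp add: algebra_simps)
  also have "\<dots> \<in> S" using u k(1) by blast
  finally show ?thesis using that k(2) by blast
qed

lemma syndetic_plus_nhds_finitely_syndetic:
  fixes R W :: "'a::topological_ab_group_add set"
  assumes "syndetic R" "open W" "0 \<in> W"
  obtains F where "finite F" "\<And>t. \<exists>f\<in>F. \<exists>w\<in>W. \<exists>r\<in>R. f + t = w + r"
proof -
  obtain K where K: "compact K" "\<And>t. (\<lambda>k. k + t) ` K \<inter> R \<noteq> {}"
    using assms(1) unfolding syndetic_def by blast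
  have "open ((\<lambda>k. f - k) -` W)" for f
    using assms(2) by (rule open_vimage) (intro continuous_intros)
  moreover have "K \<subseteq> (\<Union>f\<in>K. (\<lambda>k. f - k) -` W)" using assms(3) by auto
  ultimately obtain F where F: "F \<subseteq> K" "finite F" "K \<subseteq> (\<Union>f\<in>F. (\<lambda>k. f - k) -` W)"
    by (rule compactE_image[OF K(1)])
  have "\<exists>f\<in>F. \<exists>w\<in>W. \<exists>r\<in>R. f + t = w + r" for t
  proof -
    obtain k where k: "k \<in> K" "k + t \<in> R" using K(2)[of t] by blast
    then obtain f where "f \<in> F" "f - k \<in> W" using F(3) by blast
    moreover have "f + t = (f - k) + (k + t)" by simp
    ultimately show ?thesis using k(2) by blast
  qed
  then show ?thesis using F(2) that by blast
qed

definition equicontinuous_at :: "('a \<Rightarrow> 'b::uniform_space \<Rightarrow> 'b) \<Rightarrow> 'b set \<Rightarrow> 'b \<Rightarrow> bool" where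
  "equicontinuous_at act Y z \<longleftrightarrow> (\<forall>\<epsilon>. entourage \<epsilon> \<longrightarrow>
     (\<exists>\<delta>. entourage \<delta> \<and> (\<forall>y\<in>Y. (z, y) \<in> \<delta> \<longrightarrow> (\<forall>t. (act t z, act t y) \<in> \<epsilon>))))"

lemma equicontinuous_on_iff_at:
  "equicontinuous_on act Y \<longleftrightarrow> (\<forall>z\<in>Y. equicontinuous_at act Y z)"
  unfolding equicontinuous_on_def equicontinuous_at_def ent_img_def image_subset_iff by fastforce

lemma equicontinuous_at_pairwise:
  assumes "equicontinuous_at act Y z" "entourage \<epsilon>"
  obtains \<delta> where "entourage \<delta>"
    "\<And>y1 y2 t. y1 \<in> Y \<Longrightarrow> y2 \<in> Y \<Longrightarrow> (z, y1) \<in> \<delta> \<Longrightarrow> (z, y2) \<in> \<delta> \<Longrightarrow> (act t y1, act t y2) \<in> \<epsilon>"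
proof -
  obtain \<epsilon>1 where \<epsilon>1: "entourage \<epsilon>1" "\<And>a b c. (a, b) \<in> \<epsilon>1 \<Longrightarrow> (b, c) \<in> \<epsilon>1 \<Longrightarrow> (a, c) \<in> \<epsilon>"
    using entourage_half[OF assms(2)] by blast
  then obtain \<delta> where \<delta>: "entourage \<delta>" "\<forall>y\<in>Y. (z, y) \<in> \<delta> \<longrightarrow> (\<forall>t. (act t z, act t y) \<in> \<epsilon>1)"
    using assms(1) unfolding equicontinuous_at_def by blast
  have "(act t y1, act t y2) \<in> \<epsilon>"
    if "y1 \<in> Y" "y2 \<in> Y" "(z, y1) \<in> \<delta>" "(z, y2) \<in> \<delta>" for y1 y2 t
  proof -
    have "(act t z, act t y1) \<in> \<epsilon>1" "(act t z, act t y2) \<in> \<epsilon>1" using \<delta>(2) that by blast+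
    then show ?thesis using \<epsilon>1(2) entourage_sym[OF \<epsilon>1(1)] by blast
  qed
  then show ?thesis using that \<delta>(1) by blast
qed

context
  fixes act :: "'a::topological_ab_group_add \<Rightarrow> 'b::uniform_space \<Rightarrow> 'b"
  assumes flow: "flow act"
begin

lemma flow_add: "act (s + t) x = act s (act t x)"
  using flow unfolding flow_def by auto

lemma flow_zero: "act 0 x = x"
  using flow unfolding flow_def by auto

lemma flow_continuous_at_pair:
  assumes "open V" "act t y \<in> V"
  obtains A B where "open A" "open B" "t \<in> A" "y \<in> B" "\<And>s z. s \<in> A \<Longrightarrow> z \<in> B \<Longrightarrow> act s z \<in> V"
proof -
  have "continuous_on UNIV (\<lambda>(t, x). act t x)" using flow unfolding flow_def by simp
  then have "open ((\<lambda>(t, x). act t x) -` V)" by (rule open_vimage[OF assms(1)])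
  moreover have "(t, y) \<in> (\<lambda>(t, x). act t x) -` V" using assms(2) by simp
  ultimately obtain A B where AB: "open A" "open B" "(t, y) \<in> A \<times> B"
    "A \<times> B \<subseteq> (\<lambda>(t, x). act t x) -` V"
    by (rule open_prod_elim)
  have "act s z \<in> V" if "s \<in> A" "z \<in> B" for s z using AB(4) that by auto
  with AB(1-3) show ?thesis using that by simp
qed

lemma flow_continuous_entourage:
  assumes "entourage E"
  obtains D where "entourage D" "\<And>z. (y, z) \<in> D \<Longrightarrow> (act t y, act t z) \<in> E"
proof -
  obtain V where V: "open V" "act t y \<in> V" "\<And>z. z \<in> V \<Longrightarrow> (act t y, z) \<in> E"
    using entourage_nhds[OF assms, of "act t y"] by blast
  obtain A B where AB: "open A" "open B" "t \<in> A" "y \<in> B" "\<And>s z. s \<in> A \<Longrightarrow> z \<in> B \<Longrightarrow> act s z \<in> V"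
    using flow_continuous_at_pair[OF V(1,2)] by blast
  obtain D where D: "entourage D" "\<And>z. (y, z) \<in> D \<Longrightarrow> z \<in> B"
    using nhds_entourage[OF AB(2,4)] by blast
  have "(act t y, act t z) \<in> E" if "(y, z) \<in> D" for z
    using V(3) AB(3,5) D(2) that by blast
  with D(1) show ?thesis by (rule that)
qed

lemma orbit_closure_invariant:
  assumes "y \<in> closure (range (\<lambda>t. act t x))"
  shows "act \<sigma> y \<in> closure (range (\<lambda>t. act t x))"
  unfolding closure_iff_nhds_not_empty
proof (intro allI impI)
  fix S V assume V: "V \<subseteq> S" "open V" "act \<sigma> y \<in> V"
  obtain A B where B: "open A" "open B" "\<sigma> \<in> A" "y \<in> B" "\<And>s z. s \<in> A \<Longrightarrow> z \<in> B \<Longrightarrow> act s z \<in> V"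
    using flow_continuous_at_pair[OF V(2,3)] by blast
  then obtain \<tau> where "act \<tau> x \<in> B" using assms unfolding closure_iff_nhds_not_empty by blast
  then have "act (\<sigma> + \<tau>) x \<in> V" using B(3,5) by (simp add: flow_add)
  then show "range (\<lambda>t. act t x) \<inter> S \<noteq> {}" using V(1) by blast
qed

lemma flow_compact_times_entourage:
  assumes "compact K" "entourage E"
  obtains W where "open W" "y \<in> W" "\<And>k z. k \<in> K \<Longrightarrow> z \<in> W \<Longrightarrow> (act k y, act k z) \<in> E"
proof -
  obtain E1 where E1: "entourage E1" "\<And>a b c. (a, b) \<in> E1 \<Longrightarrow> (b, c) \<in> E1 \<Longrightarrow> (a, c) \<in> E"
    using entourage_half[OF assms(2)] by blast
  have "\<forall>k. \<exists>A B. open A \<and> open B \<and> k \<in> A \<and> y \<in> B \<and> (\<forall>s\<in>A. \<forall>z\<in>B. (act k y, act s z) \<in> E1)"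
  proof
    fix k
    obtain V where V: "open V" "act k y \<in> V" "\<And>z. z \<in> V \<Longrightarrow> (act k y, z) \<in> E1"
      using entourage_nhds[OF E1(1), of "act k y"] by blast
    obtain A B where "open A" "open B" "k \<in> A" "y \<in> B" "\<And>s z. s \<in> A \<Longrightarrow> z \<in> B \<Longrightarrow> act s z \<in> V"
      using flow_continuous_at_pair[OF V(1,2)] by blast
    then show "\<exists>A B. open A \<and> open B \<and> k \<in> A \<and> y \<in> B \<and> (\<forall>s\<in>A. \<forall>z\<in>B. (act k y, act s z) \<in> E1)"
      using V(3) by blast
  qed
  then obtain A B where AB: "\<And>k. open (A k)" "\<And>k. open (B k)" "\<And>k. k \<in> A k" "\<And>k. y \<in> B k"
    "\<And>k s z. s \<in> A k \<Longrightarrow> z \<in> B k \<Longrightarrow> (act k y, act s z) \<in> E1"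
    by metis
  have "K \<subseteq> (\<Union>k\<in>K. A k)" using AB(3) by blast
  then obtain K' where K': "K' \<subseteq> K" "finite K'" "K \<subseteq> (\<Union>k\<in>K'. A k)"
    by (rule compactE_image[OF assms(1) AB(1)])
  have "(act k y, act k z) \<in> E" if k: "k \<in> K" and z: "z \<in> (\<Inter>k\<in>K'. B k)" for k z
  proof -
    obtain k' where k': "k' \<in> K'" "k \<in> A k'" using K'(3) k by blast
    have "(act k y, act k' y) \<in> E1" using entourage_sym[OF E1(1) AB(5)[OF k'(2) AB(4)]] .
    moreover have "(act k' y, act k z) \<in> E1" using AB(5)[OF k'(2)] z k'(1) by blast
    ultimately show ?thesis by (rule E1(2))
  qed
  moreover have "open (\<Inter>k\<in>K'. B k)" "y \<in> (\<Inter>k\<in>K'. B k)" using K'(2) AB(2,4) by auto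
  ultimately show ?thesis using that by blast
qed

lemma ap_point_in_orbit_closure:
  assumes "ap_point act x" "y \<in> closure (range (\<lambda>t. act t x))"
  shows "x \<in> closure (range (\<lambda>t. act t y))"
  unfolding closure_iff_nhds_not_empty
proof (intro allI impI)
  fix V0 V assume V: "V \<subseteq> V0" "open V" "x \<in> V"
  obtain E where E: "entourage E" "\<And>z. (x, z) \<in> E \<Longrightarrow> z \<in> V"
    using nhds_entourage[OF V(2,3)] by blast
  obtain E1 where E1: "entourage E1" "\<And>a b c. (a, b) \<in> E1 \<Longrightarrow> (b, c) \<in> E1 \<Longrightarrow> (a, c) \<in> E"
    using entourage_half[OF E(1)] by blast
  obtain U where U: "open U" "x \<in> U" "\<And>z. z \<in> U \<Longrightarrow> (x, z) \<in> E1"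
    using entourage_nhds[OF E1(1), of x] by blast
  have "syndetic {r. act r x \<in> U}" using assms(1) U(1,2) unfolding ap_point_def by blast
  then obtain K where K: "compact K" "\<And>t. (\<lambda>k. k + t) ` K \<inter> {r. act r x \<in> U} \<noteq> {}"
    unfolding syndetic_def by blast
  obtain W where W: "open W" "y \<in> W" "\<And>k z. k \<in> K \<Longrightarrow> z \<in> W \<Longrightarrow> (act k y, act k z) \<in> E1"
    using flow_compact_times_entourage[OF K(1) E1(1), of y] by blast
  obtain \<tau> where \<tau>: "act \<tau> x \<in> W"
    using assms(2) W(1,2) unfolding closure_iff_nhds_not_empty by blast
  obtain k where k: "k \<in> K" "act (k + \<tau>) x \<in> U" using K(2)[of \<tau>] by blast
  have "(x, act k (act \<tau> x)) \<in> E1" using U(3) k(2) by (simp add: flow_add)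
  moreover have "(act k (act \<tau> x), act k y) \<in> E1" using entourage_sym[OF E1(1) W(3)[OF k(1) \<tau>]] .
  ultimately have "act k y \<in> V" using E1(2) E(2) by blast
  then show "range (\<lambda>t. act t y) \<inter> V0 \<noteq> {}" using V(1) by blast
qed

lemma ap_point_finitely_syndetic_returns:
  assumes "ap_point act x" "open V" "x \<in> V"
  obtains F where "finite F" "\<And>t. \<exists>f\<in>F. act (f + t) x \<in> V"
proof -
  have "act 0 x \<in> V" using assms(3) by (simp add: flow_zero)
  then obtain W U where WU: "open W" "open U" "0 \<in> W" "x \<in> U"
    "\<And>w z. w \<in> W \<Longrightarrow> z \<in> U \<Longrightarrow> act w z \<in> V"
    using flow_continuous_at_pair[OF assms(2)] by blast
  have "syndetic {r. act r x \<in> U}" using assms(1) WU(2,4) unfolding ap_point_def by blast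
  then obtain F where F: "finite F" "\<And>t. \<exists>f\<in>F. \<exists>w\<in>W. \<exists>r\<in>{r. act r x \<in> U}. f + t = w + r"
    using syndetic_plus_nhds_finitely_syndetic[OF _ WU(1,3)] by blast
  have "\<exists>f\<in>F. act (f + t) x \<in> V" for t
  proof -
    obtain f w r where "f \<in> F" "w \<in> W" "act r x \<in> U" "f + t = w + r" using F(2)[of t] by blast
    then show ?thesis using WU(5) flow_add by metis
  qed
  then show ?thesis using F(1) that by blast
qed

lemma thickly_stable_equicontinuous_at_orbit:
  assumes "thickly_stable act" "ap_point act x"
  shows "equicontinuous_at act (range (\<lambda>t. act t x)) x"
  unfolding equicontinuous_at_def
proof (intro allI impI)
  fix \<epsilon> :: "('b \<times> 'b) set" assume "entourage \<epsilon>"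
  then obtain \<epsilon>1 where \<epsilon>1: "entourage \<epsilon>1" "\<And>a b c. (a, b) \<in> \<epsilon>1 \<Longrightarrow> (b, c) \<in> \<epsilon>1 \<Longrightarrow> (a, c) \<in> \<epsilon>"
    using entourage_half by blast
  then obtain \<delta>1 S where \<delta>1: "entourage \<delta>1" "thick S"
    "\<And>s. s \<in> S \<Longrightarrow> act s ` ent_img \<delta>1 {x} \<subseteq> ent_img \<epsilon>1 {act s x}"
    using assms(1) unfolding thickly_stable_def by meson
  obtain \<delta> where \<delta>: "entourage \<delta>" "\<And>a b c. (a, b) \<in> \<delta> \<Longrightarrow> (b, c) \<in> \<delta> \<Longrightarrow> (a, c) \<in> \<delta>1"
    using entourage_half[OF \<delta>1(1)] by blast
  have "(act t x, act t (act \<tau> x)) \<in> \<epsilon>" if \<tau>: "(x, act \<tau> x) \<in> \<delta>" for \<tau> t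
  proof -
    obtain D where D: "entourage D" "\<And>z. (x, z) \<in> D \<Longrightarrow> (act \<tau> x, act \<tau> z) \<in> \<delta>"
      using flow_continuous_entourage[OF \<delta>(1)] by blast
    obtain U where U: "open U" "x \<in> U" "\<And>z. z \<in> U \<Longrightarrow> (x, z) \<in> D \<inter> \<delta>"
      using entourage_nhds[OF entourage_Int[OF D(1) \<delta>(1)], of x] by blast
    have "syndetic {r. act r x \<in> U}" using assms(2) U(1,2) unfolding ap_point_def by blast
    then obtain r where r: "r \<in> {r. act r x \<in> U}" "t - r \<in> S"
      using syndetic_meets_thick_translate[OF _ \<delta>1(2)] by blast
    \<comment> \<open>both t x and t(\<tau>x) are (t - r)-images of points \<delta>1-close to x\<close>
    have shifted: "(act (t - r) x, act t (act \<tau>' x)) \<in> \<epsilon>1"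
      if "(x, act \<tau>' x) \<in> \<delta>" "(act \<tau>' x, act \<tau>' (act r x)) \<in> \<delta>" for \<tau>'
    proof -
      have "(x, act (\<tau>' + r) x) \<in> \<delta>1" using \<delta>(2)[OF that] by (simp add: flow_add)
      then have "act (t - r) (act (\<tau>' + r) x) \<in> ent_img \<epsilon>1 {act (t - r) x}"
        using \<delta>1(3)[OF r(2)] unfolding ent_img_def by blast
      moreover have "act (t - r) (act (\<tau>' + r) x) = act t (act \<tau>' x)"
        by (simp flip: flow_add add: algebra_simps)
      ultimately show ?thesis unfolding ent_img_def by simp
    qed
    have "(act (t - r) x, act t x) \<in> \<epsilon>1"
      using shifted[of 0] U(3) r(1) entourage_refl[OF \<delta>(1)] by (simp add: flow_zero)
    moreover have "(act (t - r) x, act t (act \<tau> x)) \<in> \<epsilon>1"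
      using shifted[OF \<tau> D(2)] U(3) r(1) by blast
    ultimately show ?thesis using \<epsilon>1(2) entourage_sym[OF \<epsilon>1(1)] by blast
  qed
  then show "\<exists>\<delta>. entourage \<delta> \<and> (\<forall>y\<in>range (\<lambda>t. act t x). (x, y) \<in> \<delta> \<longrightarrow> (\<forall>t. (act t x, act t y) \<in> \<epsilon>))"
    using \<delta>(1) by blast
qed

lemma equicontinuous_at_closure:
  assumes "equicontinuous_at act Y x"
  shows "equicontinuous_at act (closure Y) x"
  unfolding equicontinuous_at_def
proof (intro allI impI)
  fix \<epsilon> :: "('b \<times> 'b) set" assume "entourage \<epsilon>"
  then obtain \<epsilon>1 where \<epsilon>1: "entourage \<epsilon>1" "\<And>a b c. (a, b) \<in> \<epsilon>1 \<Longrightarrow> (b, c) \<in> \<epsilon>1 \<Longrightarrow> (a, c) \<in> \<epsilon>"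
    using entourage_half by blast
  then obtain \<delta>0 where \<delta>0: "entourage \<delta>0" "\<forall>y\<in>Y. (x, y) \<in> \<delta>0 \<longrightarrow> (\<forall>t. (act t x, act t y) \<in> \<epsilon>1)"
    using assms unfolding equicontinuous_at_def by blast
  obtain \<delta> where \<delta>: "entourage \<delta>" "\<And>a b c. (a, b) \<in> \<delta> \<Longrightarrow> (b, c) \<in> \<delta> \<Longrightarrow> (a, c) \<in> \<delta>0"
    using entourage_half[OF \<delta>0(1)] by blast
  have "(act t x, act t y) \<in> \<epsilon>" if y: "y \<in> closure Y" "(x, y) \<in> \<delta>" for y t
  proof -
    obtain D where D: "entourage D" "\<And>z. (y, z) \<in> D \<Longrightarrow> (act t y, act t z) \<in> \<epsilon>1"
      using flow_continuous_entourage[OF \<epsilon>1(1)] by blast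
    obtain y' where y': "y' \<in> Y" "(y, y') \<in> D \<inter> \<delta>"
      using closure_entourage_close[OF y(1) entourage_Int[OF D(1) \<delta>(1)]] by blast
    then have "(act t x, act t y') \<in> \<epsilon>1" using \<delta>0(2) \<delta>(2) y(2) by blast
    moreover have "(act t y', act t y) \<in> \<epsilon>1" using entourage_sym[OF \<epsilon>1(1) D(2)] y' by blast
    ultimately show ?thesis using \<epsilon>1(2) by blast
  qed
  then show "\<exists>\<delta>. entourage \<delta> \<and> (\<forall>y\<in>closure Y. (x, y) \<in> \<delta> \<longrightarrow> (\<forall>t. (act t x, act t y) \<in> \<epsilon>))"
    using \<delta>(1) by blast
qed

text \<open>z is moved near x by some \<sigma>, and every act t factors as act (t - \<sigma>) \<circ> act \<sigma>.\<close>
lemma equicontinuous_at_transfer: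
  assumes "equicontinuous_at act Y x" "x \<in> closure (range (\<lambda>t. act t z))"
    and "\<And>t y. y \<in> Y \<Longrightarrow> act t y \<in> Y" "z \<in> Y"
  shows "equicontinuous_at act Y z"
  unfolding equicontinuous_at_def
proof (intro allI impI)
  fix \<epsilon> :: "('b \<times> 'b) set" assume "entourage \<epsilon>"
  then obtain \<delta>2 where \<delta>2: "entourage \<delta>2"
    "\<And>y1 y2 t. y1 \<in> Y \<Longrightarrow> y2 \<in> Y \<Longrightarrow> (x, y1) \<in> \<delta>2 \<Longrightarrow> (x, y2) \<in> \<delta>2 \<Longrightarrow> (act t y1, act t y2) \<in> \<epsilon>"
    using equicontinuous_at_pairwise[OF assms(1)] by blast
  obtain \<delta>1 where \<delta>1: "entourage \<delta>1" "\<And>a b c. (a, b) \<in> \<delta>1 \<Longrightarrow> (b, c) \<in> \<delta>1 \<Longrightarrow> (a, c) \<in> \<delta>2"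
    using entourage_half[OF \<delta>2(1)] by blast
  obtain \<sigma> where \<sigma>: "(x, act \<sigma> z) \<in> \<delta>1"
    using closure_entourage_close[OF assms(2) \<delta>1(1)] by blast
  obtain \<delta> where \<delta>: "entourage \<delta>" "\<And>w. (z, w) \<in> \<delta> \<Longrightarrow> (act \<sigma> z, act \<sigma> w) \<in> \<delta>1"
    using flow_continuous_entourage[OF \<delta>1(1)] by blast
  have "(act t z, act t w) \<in> \<epsilon>" if w: "w \<in> Y" "(z, w) \<in> \<delta>" for w t
  proof -
    have "(x, act \<sigma> z) \<in> \<delta>2" using \<delta>1(2)[OF \<sigma> entourage_refl[OF \<delta>1(1)]] .
    moreover have "(x, act \<sigma> w) \<in> \<delta>2" using \<delta>1(2)[OF \<sigma> \<delta>(2)[OF w(2)]] .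
    ultimately have "(act (t - \<sigma>) (act \<sigma> z), act (t - \<sigma>) (act \<sigma> w)) \<in> \<epsilon>"
      using \<delta>2(2) assms(3,4) w(1) by blast
    then show ?thesis by (simp flip: flow_add)
  qed
  then show "\<exists>\<delta>. entourage \<delta> \<and> (\<forall>w\<in>Y. (z, w) \<in> \<delta> \<longrightarrow> (\<forall>t. (act t z, act t w) \<in> \<epsilon>))"
    using \<delta>(1) by blast
qed


lemma equicontinuous_at_return_times_move_uniformly:
  assumes "equicontinuous_at act (closure (range (\<lambda>t. act t x))) x" "entourage \<epsilon>"
  obtains \<delta> where "entourage \<delta>"
    "\<And>a y. (x, act (- a) x) \<in> \<delta> \<Longrightarrow> y \<in> closure (range (\<lambda>t. act t x)) \<Longrightarrow> (y, act a y) \<in> \<epsilon>"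
proof -
  define Y where "Y = closure (range (\<lambda>t. act t x))"
  have orbit_in_Y: "act t x \<in> Y" for t unfolding Y_def by (simp add: closure_subset[THEN subsetD])
  obtain \<epsilon>2 where \<epsilon>2: "entourage \<epsilon>2"
    "\<And>a b c d. (a, b) \<in> \<epsilon>2 \<Longrightarrow> (b, c) \<in> \<epsilon>2 \<Longrightarrow> (c, d) \<in> \<epsilon>2 \<Longrightarrow> (a, d) \<in> \<epsilon>"
    using entourage_third[OF assms(2)] by blast
  obtain \<delta> where \<delta>: "entourage \<delta>"
    "\<And>y1 y2 t. y1 \<in> Y \<Longrightarrow> y2 \<in> Y \<Longrightarrow> (x, y1) \<in> \<delta> \<Longrightarrow> (x, y2) \<in> \<delta> \<Longrightarrow> (act t y1, act t y2) \<in> \<epsilon>2"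
    using equicontinuous_at_pairwise[OF assms(1) \<epsilon>2(1)] unfolding Y_def by blast
  have moves_orbit: "(act a (act \<tau> x), act \<tau> x) \<in> \<epsilon>2" if a: "(x, act (- a) x) \<in> \<delta>" for a \<tau>
  proof -
    have "(x, act 0 x) \<in> \<delta>" using entourage_refl[OF \<delta>(1)] by (simp add: flow_zero)
    then have "(act (\<tau> + a) (act 0 x), act (\<tau> + a) (act (- a) x)) \<in> \<epsilon>2"
      using a by (rule \<delta>(2)[OF orbit_in_Y orbit_in_Y])
    then show ?thesis by (simp flip: flow_add add: add.commute)
  qed
  have "(y, act a y) \<in> \<epsilon>" if a: "(x, act (- a) x) \<in> \<delta>" and y: "y \<in> Y" for a y
  proof -
    obtain D where D: "entourage D" "\<And>z. (y, z) \<in> D \<Longrightarrow> (act a y, act a z) \<in> \<epsilon>2"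
      using flow_continuous_entourage[OF \<epsilon>2(1)] by blast
    obtain z where z: "z \<in> range (\<lambda>t. act t x)" "(y, z) \<in> D \<inter> \<epsilon>2"
      using closure_entourage_close[OF y[unfolded Y_def] entourage_Int[OF D(1) \<epsilon>2(1)]] by blast
    then obtain \<tau> where "z = act \<tau> x" by blast
    then have "(y, act \<tau> x) \<in> \<epsilon>2" "(act \<tau> x, act a (act \<tau> x)) \<in> \<epsilon>2"
      "(act a (act \<tau> x), act a y) \<in> \<epsilon>2"
      using z(2) entourage_sym[OF \<epsilon>2(1) moves_orbit[OF a]] entourage_sym[OF \<epsilon>2(1) D(2)]
      by blast+
    then show ?thesis using \<epsilon>2(2) by blast
  qed
  then show ?thesis using that \<delta>(1) unfolding Y_def by blast
qed

lemma equicontinuous_at_discrete_ap_on: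
  assumes "ap_point act x" "equicontinuous_at act (closure (range (\<lambda>t. act t x))) x"
  shows "discrete_ap_on act (closure (range (\<lambda>t. act t x)))"
  unfolding discrete_ap_on_def
proof (intro allI impI)
  fix \<epsilon> :: "('b \<times> 'b) set" assume "entourage \<epsilon>"
  then obtain \<delta> where \<delta>: "entourage \<delta>"
    "\<And>a y. (x, act (- a) x) \<in> \<delta> \<Longrightarrow> y \<in> closure (range (\<lambda>t. act t x)) \<Longrightarrow> (y, act a y) \<in> \<epsilon>"
    using equicontinuous_at_return_times_move_uniformly[OF assms(2)] by blast
  define A where "A = {a. (x, act (- a) x) \<in> \<delta>}"
  obtain V where V: "open V" "x \<in> V" "\<And>z. z \<in> V \<Longrightarrow> (x, z) \<in> \<delta>"
    using entourage_nhds[OF \<delta>(1), of x] by blast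
  obtain F where F: "finite F" "\<And>t. \<exists>f\<in>F. act (f + t) x \<in> V"
    using ap_point_finitely_syndetic_returns[OF assms(1) V(1,2)] by blast
  have "t \<in> {f + a | f a. f \<in> F \<and> a \<in> A}" for t
  proof -
    obtain f where f: "f \<in> F" "act (f + - t) x \<in> V" using F(2) by blast
    then have "t - f \<in> A" using V(3) unfolding A_def by (simp add: algebra_simps)
    moreover have "t = f + (t - f)" by simp
    ultimately show ?thesis using f(1) by blast
  qed
  then have "{f + a | f a. f \<in> F \<and> a \<in> A} = UNIV" by blast
  moreover have "act a y \<in> ent_img \<epsilon> {y}" if "y \<in> closure (range (\<lambda>t. act t x))" "a \<in> A" for y a
    using \<delta>(2) that unfolding A_def ent_img_def by blast
  ultimately show "\<exists>A F. finite F \<and> {f + a | f a. f \<in> F \<and> a \<in> A} = UNIV \<and>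
      (\<forall>y\<in>closure (range (\<lambda>t. act t x)). \<forall>a\<in>A. act a y \<in> ent_img \<epsilon> {y})"
    using F(1) by blast
qed

end

theorem theorem2p5:
  fixes act :: "'a::{topological_ab_group_add, t2_space} \<Rightarrow> 'b::{uniform_space, t2_space} \<Rightarrow> 'b"
    and x :: 'b
  assumes "flow act"
    and "thickly_stable act"
    and "ap_point act x"
  shows "discrete_ap_on act (closure (range (\<lambda>t. act t x)))
       \<and> equicontinuous_on act (closure (range (\<lambda>t. act t x)))"
proof -
  let ?Y = "closure (range (\<lambda>t. act t x))"
  have "equicontinuous_at act ?Y x"
    using assms by (intro equicontinuous_at_closure thickly_stable_equicontinuous_at_orbit)
  moreover have "equicontinuous_at act ?Y z" if "z \<in> ?Y" for z
    using equicontinuous_at_transfer[OF assms(1) \<open>equicontinuous_at act ?Y x\<close>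
        ap_point_in_orbit_closure[OF assms(1,3) that] orbit_closure_invariant[OF assms(1)] that] .
  ultimately show ?thesis
    using equicontinuous_at_discrete_ap_on[OF assms(1,3)] by (simp add: equicontinuous_on_iff_at)
qed

end
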